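(* Let $G$ be a large scale group whose large scale structure is induced by a Cayley metric $d$. Then $\mathrm{Ends}(G)$ is non-metrizable if and only if one of the following holds: (1) there is a bounded subset $B$ of $G$ such that the union of the bounded $1$-components of $G\setminus B$ is unbounded; (2) there is a bounded subset $B$ of $G$ such that $G\setminus B$ has infinitely many unbounded $1$-components.
   Context: A large scale group is a group $G$ with a bornology $\mathcal B$ (a cover of $G$ closed under subsets and finite unions) closed under inverses and products; uniformly bounded covers are those refining $\{gB\}_{g\in G}$ for some $B\in\mathcal B$, and bounded sets are members of $\mathcal B$. A Cayley graph of $G$ is a connected graph $\Gamma$ with vertex set $G$ whose graph metric is left-invariant and such that the inclusion $G\to\Gamma$ is a coarse equivalence; the restriction $d$ of its graph metric to $G$ is a Cayley metric (so $d$-bounded sets are exactly the bounded sets of $G$). The $1$-components of $A\subseteq G$ are the equivalence classes of $A$ under the relation "joined by a finite sequence in $A$ whose consecutive terms are at $d$-distance at most 1". For a uniformly bounded cover $\mathcal U$ and $A\subseteq G$, $st(A,\mathcal U)$ is the union of members of $\mathcal U$ meeting $A$. $A$ is coarsely clopen if $st(A,\mathcal U)\cap st(G\setminus A,\mathcal U)$ is bounded for every uniformly bounded $\mathcal U$. An end of $G$ is a family of unbounded coarsely clopen sets maximal with respect to all finite intersections being unbounded. $\mathrm{Ends}(G)$ is topologized by the basis consisting of the sets $U_{end}=\{E\in\mathrm{Ends}(G):U\in E\}$, $U$ ranging over coarsely clopen subsets of $G$. *)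

theory Defs
  imports "HOL-Algebra.Coset" "HOL-Analysis.Analysis"
begin

definition graph_dist :: "('a \<times> 'a) set \<Rightarrow> 'a \<Rightarrow> 'a \<Rightarrow> nat" where
  "graph_dist E x y = (LEAST n. (x, y) \<in> E ^^ n)"

text \<open>d is the restriction to G of the graph metric of a connected (simple, undirected)
  graph with vertex set G whose graph metric is left-invariant.\<close>
definition cayley_graph_metric :: "('a, 'b) monoid_scheme \<Rightarrow> ('a \<Rightarrow> 'a \<Rightarrow> nat) \<Rightarrow> bool" where
  "cayley_graph_metric G d \<longleftrightarrow>
     (\<exists>E. E \<subseteq> carrier G \<times> carrier G \<and> sym E \<and> irrefl E
        \<and> (\<forall>x\<in>carrier G. \<forall>y\<in>carrier G. (x, y) \<in> E\<^sup>*)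
        \<and> (\<forall>x\<in>carrier G. \<forall>y\<in>carrier G. d x y = graph_dist E x y))
     \<and> (\<forall>g\<in>carrier G. \<forall>x\<in>carrier G. \<forall>y\<in>carrier G. d (g \<otimes>\<^bsub>G\<^esub> x) (g \<otimes>\<^bsub>G\<^esub> y) = d x y)"

definition metric_bornology :: "('a, 'b) monoid_scheme \<Rightarrow> ('a \<Rightarrow> 'a \<Rightarrow> nat) \<Rightarrow> 'a set set" where
  "metric_bornology G d = {A. A \<subseteq> carrier G \<and> (\<exists>r. \<forall>x\<in>A. \<forall>y\<in>A. d x y \<le> r)}"

definition unif_bounded_cover :: "('a, 'b) monoid_scheme \<Rightarrow> 'a set set \<Rightarrow> 'a set set \<Rightarrow> bool" where
  "unif_bounded_cover G Bo \<U> \<longleftrightarrow> \<Union>\<U> = carrier G \<and>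
     (\<exists>B\<in>Bo. \<forall>U\<in>\<U>. \<exists>g\<in>carrier G. U \<subseteq> g <#\<^bsub>G\<^esub> B)"

definition star :: "'a set \<Rightarrow> 'a set set \<Rightarrow> 'a set" where
  "star A \<U> = \<Union>{U\<in>\<U>. U \<inter> A \<noteq> {}}"

definition coarsely_clopen :: "('a, 'b) monoid_scheme \<Rightarrow> 'a set set \<Rightarrow> 'a set \<Rightarrow> bool" where
  "coarsely_clopen G Bo A \<longleftrightarrow> A \<subseteq> carrier G \<and>
     (\<forall>\<U>. unif_bounded_cover G Bo \<U> \<longrightarrow> star A \<U> \<inter> star (carrier G - A) \<U> \<in> Bo)"

definition unbounded_fip :: "'a set set \<Rightarrow> 'a set set \<Rightarrow> bool" where
  "unbounded_fip Bo \<E> \<longleftrightarrow> (\<forall>\<F>. \<F> \<subseteq> \<E> \<and> finite \<F> \<and> \<F> \<noteq> {} \<longrightarrow> \<Inter>\<F> \<notin> Bo)"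

definition is_end :: "('a, 'b) monoid_scheme \<Rightarrow> 'a set set \<Rightarrow> 'a set set \<Rightarrow> bool" where
  "is_end G Bo \<E> \<longleftrightarrow>
     \<E> \<subseteq> {A. coarsely_clopen G Bo A \<and> A \<notin> Bo} \<and> unbounded_fip Bo \<E> \<and>
     (\<forall>\<E>'. \<E> \<subseteq> \<E>' \<and> \<E>' \<subseteq> {A. coarsely_clopen G Bo A \<and> A \<notin> Bo} \<and> unbounded_fip Bo \<E>'
            \<longrightarrow> \<E>' = \<E>)"

definition Ends :: "('a, 'b) monoid_scheme \<Rightarrow> 'a set set \<Rightarrow> 'a set set set" where
  "Ends G Bo = {\<E>. is_end G Bo \<E>}"

definition end_nbhd :: "('a, 'b) monoid_scheme \<Rightarrow> 'a set set \<Rightarrow> 'a set \<Rightarrow> 'a set set set" where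
  "end_nbhd G Bo U = {\<E> \<in> Ends G Bo. U \<in> \<E>}"

definition ends_topology :: "('a, 'b) monoid_scheme \<Rightarrow> 'a set set \<Rightarrow> 'a set set topology" where
  "ends_topology G Bo = topology_generated_by {end_nbhd G Bo U | U. coarsely_clopen G Bo U}"

definition one_components :: "('a \<Rightarrow> 'a \<Rightarrow> nat) \<Rightarrow> 'a set \<Rightarrow> 'a set set" where
  "one_components d A =
     (let R = {(x, y). x \<in> A \<and> y \<in> A \<and> d x y \<le> 1} in A // (R\<^sup>*))"

end

theory Submission
  imports Defs
begin

text \<open>
  For n large, a coarsely clopen set contains or misses each 1-component of the complement of
  the ball of radius n, so an end is determined by the components of these complements that it
  contains.  If neither (1) nor (2) holds, each such complement has finitely many unbounded
  components and the bounded ones together are bounded; hence every end contains exactly one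
  unbounded component at each level n, and 1/(n+1), for the first level n at which two ends
  contain different components, is an ultrametric inducing the topology of Ends(G).

  Conversely, (1) or (2) yields pairwise disjoint components c_n of the complement of a bounded
  set whose tails are unbounded, and an end F containing all tails.  Given countably many basic
  neighbourhoods U_k of F, split the indices into I and its complement so that every U_k meets
  both \<Union>(c ` I) and \<Union>(c ` -I) in unbounded sets; whichever of the two unions lies in F
  is a neighbourhood of F containing none of the U_k, so F has no countable neighbourhood base.
\<close>

lemma relpow_sym:
  assumes "sym R" "(x, y) \<in> R ^^ n"
  shows "(y, x) \<in> R ^^ n"
  using assms(2)
proof (induction n arbitrary: y)
  case (Suc n)
  then obtain z where "(x, z) \<in> R ^^ n" "(z, y) \<in> R" by auto
  with Suc.IH assms(1) show ?case by (meson relpow_Suc_I2 symD)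
qed simp

lemma relpow_leaves_set:
  assumes "(x, y) \<in> R ^^ n" "x \<in> S" "y \<notin> S"
  shows "\<exists>a b k. k < n \<and> (x, a) \<in> R ^^ k \<and> (a, b) \<in> R \<and> a \<in> S \<and> b \<notin> S"
  using assms(1,3)
proof (induction n arbitrary: y)
  case 0
  with assms(2) show ?case by simp
next
  case (Suc n)
  then obtain z where z: "(x, z) \<in> R ^^ n" "(z, y) \<in> R" by auto
  show ?case
  proof (cases "z \<in> S")
    case True
    with z Suc.prems(2) show ?thesis by blast
  next
    case False
    with Suc.IH[OF z(1)] show ?thesis using less_SucI by blast
  qed
qed

lemma split_infinite_sets:
  fixes \<N> :: "nat set set"
  assumes "countable \<N>" and infinite: "\<And>N. N \<in> \<N> \<Longrightarrow> infinite N"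
  shows "\<exists>I. \<forall>N\<in>\<N>. N \<inter> I \<noteq> {} \<and> N - I \<noteq> {}"
proof (cases "\<N> = {}")
  case False
  define e where "e = from_nat_into \<N>"
  have e: "e k \<in> \<N>" for k using False by (simp add: e_def from_nat_into)
  \<comment> \<open>Every member of \<N> is hit at two consecutive steps 2k, 2k+1; the even steps form I.\<close>
  have "\<exists>a. \<forall>s. a s \<in> e (s div 2) \<and> a s < a (Suc s)"
  proof (rule dependent_nat_choice)
    have "e 0 \<noteq> {}" using infinite[OF e, of 0] by auto
    then show "\<exists>n. n \<in> e (0 div 2)" by auto
    show "\<exists>n'. n' \<in> e (Suc s div 2) \<and> n < n'" for n s
      using infinite[OF e, of "Suc s div 2"] unfolding infinite_nat_iff_unbounded by blast
  qed
  then obtain a where a: "\<And>s. a s \<in> e (s div 2)" and "\<And>s. a s < a (Suc s)" by blast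
  then have mono: "strict_mono a" by (simp add: strict_mono_Suc_iff)
  show ?thesis
  proof (intro exI ballI conjI)
    fix N assume "N \<in> \<N>"
    then obtain k where k: "e k = N" using from_nat_into_surj[OF assms(1)] unfolding e_def by blast
    have "a (2 * k) \<in> N" "a (2 * k) \<in> a ` {s. even s}" using a[of "2 * k"] k by simp_all
    then show "N \<inter> a ` {s. even s} \<noteq> {}" by blast
    have "a (2 * k + 1) \<notin> a ` {s. even s}"
    proof
      assume "a (2 * k + 1) \<in> a ` {s. even s}"
      then obtain s where "even s" "a (2 * k + 1) = a s" by blast
      then have "2 * k + 1 = s" using strict_mono_eq[OF mono] by simp
      with \<open>even s\<close> show False by presburger
    qed
    moreover have "a (2 * k + 1) \<in> N" using a[of "2 * k + 1"] k by simp
    ultimately show "N - a ` {s. even s} \<noteq> {}" by blast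
  qed
qed simp

definition first_difference_dist :: "('x \<Rightarrow> nat \<Rightarrow> 'y) \<Rightarrow> 'x \<Rightarrow> 'x \<Rightarrow> real" where
  "first_difference_dist f x y =
     (if \<exists>n. f x n \<noteq> f y n then inverse (real (Suc (LEAST n. f x n \<noteq> f y n))) else 0)"

lemma first_difference_dist_less_inverse_iff:
  "first_difference_dist f x y < inverse (real (Suc n)) \<longleftrightarrow> (\<forall>m\<le>n. f x m = f y m)"
proof (cases "\<exists>m. f x m \<noteq> f y m")
  case True
  define k where "k = (LEAST m. f x m \<noteq> f y m)"
  have k: "f x k \<noteq> f y k" using LeastI_ex[OF True] by (simp add: k_def)
  have below: "f x m = f y m" if "m < k" for m using not_less_Least[OF that[unfolded k_def]] by simp
  have "(\<forall>m\<le>n. f x m = f y m) \<longleftrightarrow> n < k"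
    using k below by (auto simp: not_less[symmetric])
  moreover have "first_difference_dist f x y = inverse (real (Suc k))"
    using True by (simp add: first_difference_dist_def k_def)
  ultimately show ?thesis by simp
next
  case False
  then show ?thesis by (simp add: first_difference_dist_def)
qed

lemma Metric_space_first_difference_dist:
  assumes "\<And>x y. x \<in> S \<Longrightarrow> y \<in> S \<Longrightarrow> (\<And>n. f x n = f y n) \<Longrightarrow> x = y"
  shows "Metric_space S (first_difference_dist f)"
proof
  fix x y z
  show "0 \<le> first_difference_dist f x y" by (simp add: first_difference_dist_def)
  have "(\<lambda>n. f x n \<noteq> f y n) = (\<lambda>n. f y n \<noteq> f x n)" by auto
  then show "first_difference_dist f x y = first_difference_dist f y x"
    by (simp add: first_difference_dist_def)
  show "first_difference_dist f x y = 0 \<longleftrightarrow> x = y" if "x \<in> S" "y \<in> S"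
  proof
    assume "first_difference_dist f x y = 0"
    then have "\<forall>m\<le>n. f x m = f y m" for n
      using first_difference_dist_less_inverse_iff[of f x y n] by simp
    then show "x = y" using assms[OF that] by blast
  qed (simp add: first_difference_dist_def)
  show "first_difference_dist f x z \<le> first_difference_dist f x y + first_difference_dist f y z"
  proof (cases "\<exists>m. f x m \<noteq> f z m")
    case True
    define k where "k = (LEAST m. f x m \<noteq> f z m)"
    have "f x k \<noteq> f z k" using LeastI_ex[OF True] by (simp add: k_def)
    then have "\<not> (\<forall>m\<le>k. f x m = f y m) \<or> \<not> (\<forall>m\<le>k. f y m = f z m)" by auto
    then have "\<not> first_difference_dist f x y < inverse (real (Suc k)) \<or>
               \<not> first_difference_dist f y z < inverse (real (Suc k))"
      by (simp only: first_difference_dist_less_inverse_iff)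
    moreover have "first_difference_dist f x z = inverse (real (Suc k))"
      using True by (simp add: first_difference_dist_def k_def)
    moreover have "0 \<le> first_difference_dist f x y" "0 \<le> first_difference_dist f y z"
      by (simp_all add: first_difference_dist_def)
    ultimately show ?thesis by linarith
  qed (auto simp: first_difference_dist_def)
qed

locale connected_graph_metric =
  fixes V :: "'a set" and E :: "('a \<times> 'a) set" and d :: "'a \<Rightarrow> 'a \<Rightarrow> nat"
  assumes edges_subset: "E \<subseteq> V \<times> V"
    and sym_edges: "sym E"
    and connected: "\<And>x y. x \<in> V \<Longrightarrow> y \<in> V \<Longrightarrow> (x, y) \<in> E\<^sup>*"
    and dist_graph_dist: "\<And>x y. x \<in> V \<Longrightarrow> y \<in> V \<Longrightarrow> d x y = graph_dist E x y"
begin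

lemma dist_path: "x \<in> V \<Longrightarrow> y \<in> V \<Longrightarrow> (x, y) \<in> E ^^ d x y"
  using connected[of x y] LeastI_ex[of "\<lambda>n. (x, y) \<in> E ^^ n"]
  by (auto simp: dist_graph_dist graph_dist_def rtrancl_power)

lemma dist_le_path: "x \<in> V \<Longrightarrow> y \<in> V \<Longrightarrow> (x, y) \<in> E ^^ n \<Longrightarrow> d x y \<le> n"
  by (simp add: dist_graph_dist graph_dist_def Least_le)

lemma dist_self [simp]: "x \<in> V \<Longrightarrow> d x x = 0"
  using dist_le_path[of x x 0] by simp

lemma dist_commute: "x \<in> V \<Longrightarrow> y \<in> V \<Longrightarrow> d x y = d y x"
  by (meson dist_le_path dist_path le_antisym relpow_sym sym_edges)

lemma dist_triangle: "x \<in> V \<Longrightarrow> y \<in> V \<Longrightarrow> z \<in> V \<Longrightarrow> d x z \<le> d x y + d y z"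
  using dist_path[of x y] dist_path[of y z] by (metis dist_le_path relcomp.relcompI relpow_add)

lemma dist_edge: "(x, y) \<in> E \<Longrightarrow> d x y \<le> 1"
  using edges_subset dist_le_path[of x y 1] by auto

lemma exit_edge:
  assumes "z \<in> S" "z \<in> V" "u \<in> V" "u \<notin> S"
  shows "\<exists>a b. a \<in> S \<and> a \<in> V \<and> b \<in> V - S \<and> d a b \<le> 1 \<and> d z a < d z u \<and> d z b \<le> d z u"
proof -
  obtain a b k where abk: "k < d z u" "(z, a) \<in> E ^^ k" "(a, b) \<in> E" "a \<in> S" "b \<notin> S"
    using relpow_leaves_set[OF dist_path[OF assms(2,3)] assms(1,4)] by blast
  have ab: "a \<in> V" "b \<in> V" using abk(3) edges_subset by auto
  have "d z a \<le> k" using dist_le_path abk(2) assms(2) ab by blast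
  moreover have "d z b \<le> d z a + d a b" using dist_triangle assms(2) ab by blast
  moreover have "d a b \<le> 1" using dist_edge abk(3) .
  ultimately show ?thesis using abk ab by force
qed

definition nbhd :: "nat \<Rightarrow> 'a set \<Rightarrow> 'a set" where
  "nbhd r S = {z \<in> V. \<exists>s\<in>S. d z s \<le> r}"

lemma nbhd_mono: "r \<le> r' \<Longrightarrow> S \<subseteq> S' \<Longrightarrow> nbhd r S \<subseteq> nbhd r' S'"
  unfolding nbhd_def by (blast intro: le_trans)

lemma nbhd_Un: "nbhd r (S \<union> S') = nbhd r S \<union> nbhd r S'"
  unfolding nbhd_def by blast

lemma nbhd_nbhd:
  assumes "S \<subseteq> V" shows "nbhd r (nbhd r' S) \<subseteq> nbhd (r + r') S"
proof
  fix z assume "z \<in> nbhd r (nbhd r' S)"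
  then obtain s t where st: "z \<in> V" "s \<in> V" "t \<in> S" "d z s \<le> r" "d s t \<le> r'"
    by (auto simp: nbhd_def)
  then have "d z t \<le> d z s + d s t" using assms dist_triangle by blast
  with st have "d z t \<le> r + r'" by linarith
  with st show "z \<in> nbhd (r + r') S" unfolding nbhd_def by blast
qed

lemma self_in_nbhd: "x \<in> V \<Longrightarrow> x \<in> nbhd r {x}"
  by (simp add: nbhd_def)

definition component_rel :: "'a set \<Rightarrow> ('a \<times> 'a) set" where
  "component_rel S = {(x, y). x \<in> S \<and> y \<in> S \<and> d x y \<le> 1}"

lemma one_components_component_rel: "one_components d S = S // (component_rel S)\<^sup>*"
  by (simp add: one_components_def component_rel_def)

lemma equiv_component_rel:
  assumes "S \<subseteq> V" shows "equiv UNIV ((component_rel S)\<^sup>*)"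
proof -
  have "sym (component_rel S)"
    using assms by (auto simp: sym_def component_rel_def) (metis dist_commute subsetD)
  then show ?thesis by (simp add: equiv_def refl_rtrancl sym_rtrancl trans_rtrancl)
qed

lemma component_subset: "C \<in> one_components d S \<Longrightarrow> C \<subseteq> S"
proof -
  have "(x, y) \<in> (component_rel S)\<^sup>* \<Longrightarrow> x \<in> S \<Longrightarrow> y \<in> S" for x y
    by (induction rule: rtrancl_induct) (auto simp: component_rel_def)
  then show "C \<in> one_components d S \<Longrightarrow> C \<subseteq> S"
    by (auto simp: one_components_component_rel quotient_def)
qed

lemma in_component: "x \<in> S \<Longrightarrow> \<exists>C\<in>one_components d S. x \<in> C"
  by (auto simp: one_components_component_rel quotient_def)

lemma component_step:
  assumes "C \<in> one_components d S" "x \<in> C" "(x, y) \<in> (component_rel S)\<^sup>*"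
  shows "y \<in> C"
  using assms by (auto simp: one_components_component_rel quotient_def intro: rtrancl_trans)

lemma component_closed:
  assumes "C \<in> one_components d S" "x \<in> C" "y \<in> S" "d x y \<le> 1"
  shows "y \<in> C"
  using assms component_subset component_step[OF assms(1,2), of y]
  by (auto simp: component_rel_def)

lemma components_disjoint:
  assumes "S \<subseteq> V" "C \<in> one_components d S" "C' \<in> one_components d S" "C \<noteq> C'"
  shows "C \<inter> C' = {}"
proof -
  have "C \<in> UNIV // (component_rel S)\<^sup>*" "C' \<in> UNIV // (component_rel S)\<^sup>*"
    using assms(2,3) by (auto simp: one_components_component_rel quotient_def)
  from quotient_disj[OF equiv_component_rel[OF assms(1)] this] assms(4) show ?thesis by blast
qed

lemma component_subset_or_disjoint:
  assumes "S \<subseteq> V" "C \<in> one_components d S"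
    and no_crossing: "\<And>x y. x \<in> C \<inter> A \<Longrightarrow> y \<in> C - A \<Longrightarrow> 1 < d x y"
  shows "C \<subseteq> A \<or> C \<inter> A = {}"
proof (rule ccontr)
  assume "\<not> ?thesis"
  then obtain x y where x: "x \<in> C \<inter> A" and y: "y \<in> C - A" by blast
  obtain x0 where "C = (component_rel S)\<^sup>* `` {x0}"
    using assms(2) by (auto simp: one_components_component_rel quotient_def)
  with x y have "(x0, x) \<in> (component_rel S)\<^sup>*" "(x0, y) \<in> (component_rel S)\<^sup>*" by auto
  then have "(x, y) \<in> (component_rel S)\<^sup>*"
    using equiv_component_rel[OF assms(1)] by (meson equivE symD rtrancl_trans)
  then have "y \<in> A"
  proof (induction rule: rtrancl_induct)
    case (step z z')
    have "z \<in> C" "z' \<in> C" using component_step[OF assms(2)] x step.hyps by blast+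
    moreover have "d z z' \<le> 1" using step.hyps(2) by (simp add: component_rel_def)
    ultimately show ?case using no_crossing[of z z'] step.IH by fastforce
  qed (use x in blast)
  with y show False by blast
qed

lemma Union_components_boundary:
  assumes "K \<subseteq> one_components d (V - B)" "x \<in> \<Union>K" "y \<in> V - \<Union>K" "d x y \<le> 1"
  shows "y \<in> B"
proof (rule ccontr)
  assume "y \<notin> B"
  obtain C where "C \<in> K" "x \<in> C" using assms(2) by blast
  with assms \<open>y \<notin> B\<close> have "y \<in> C" using component_closed[of C "V - B" x y] by blast
  with \<open>C \<in> K\<close> assms(3) show False by blast
qed

end

locale cayley_graph = group G + connected_graph_metric "carrier G" E d
  for G :: "('a, 'b) monoid_scheme" (structure) and E d +
  assumes dist_left_invariant:
    "\<And>g x y. g \<in> carrier G \<Longrightarrow> x \<in> carrier G \<Longrightarrow> y \<in> carrier G \<Longrightarrow> d (g \<otimes> x) (g \<otimes> y) = d x y"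
begin

abbreviation Bo :: "'a set set" where "Bo \<equiv> metric_bornology G d"

lemma bounded_iff_subset_ball: "A \<in> Bo \<longleftrightarrow> (\<exists>R. A \<subseteq> nbhd R {\<one>})"
proof
  assume "A \<in> Bo"
  then obtain r where A: "A \<subseteq> carrier G" "\<And>x y. x \<in> A \<Longrightarrow> y \<in> A \<Longrightarrow> d x y \<le> r"
    by (auto simp: metric_bornology_def)
  show "\<exists>R. A \<subseteq> nbhd R {\<one>}"
  proof (cases "A = {}")
    case False
    then obtain a where a: "a \<in> A" by blast
    have "A \<subseteq> nbhd (r + d a \<one>) {\<one>}"
    proof
      fix x assume x: "x \<in> A"
      have "d x \<one> \<le> d x a + d a \<one>" using A(1) a x dist_triangle by blast
      with A(2)[OF x a] have "d x \<one> \<le> r + d a \<one>" by linarith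
      with A(1) x show "x \<in> nbhd (r + d a \<one>) {\<one>}" by (auto simp: nbhd_def)
    qed
    then show ?thesis ..
  qed simp
next
  assume "\<exists>R. A \<subseteq> nbhd R {\<one>}"
  then obtain R where R: "A \<subseteq> nbhd R {\<one>}" ..
  have "d x y \<le> R + R" if "x \<in> A" "y \<in> A" for x y
  proof -
    have xy: "x \<in> carrier G" "y \<in> carrier G" "d x \<one> \<le> R" "d y \<one> \<le> R"
      using R that by (auto simp: nbhd_def)
    then have "d x y \<le> d x \<one> + d \<one> y" using dist_triangle by blast
    with xy show ?thesis using dist_commute[of \<one> y] by simp
  qed
  with R show "A \<in> Bo" by (auto simp: metric_bornology_def nbhd_def)
qed

lemma empty_bounded [simp]: "{} \<in> Bo"
  by (simp add: metric_bornology_def)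

lemma bounded_subset: "A \<in> Bo \<Longrightarrow> A' \<subseteq> A \<Longrightarrow> A' \<in> Bo"
  by (meson bounded_iff_subset_ball order_trans)

lemma ball_bounded: "nbhd R {\<one>} \<in> Bo"
  using bounded_iff_subset_ball by blast

lemma bounded_Un:
  assumes "A \<in> Bo" "A' \<in> Bo" shows "A \<union> A' \<in> Bo"
proof -
  obtain R R' where "A \<subseteq> nbhd R {\<one>}" "A' \<subseteq> nbhd R' {\<one>}"
    using assms by (auto simp: bounded_iff_subset_ball)
  moreover have "nbhd R {\<one>} \<subseteq> nbhd (max R R') {\<one>}" "nbhd R' {\<one>} \<subseteq> nbhd (max R R') {\<one>}"
    by (simp_all add: nbhd_mono)
  ultimately have "A \<union> A' \<subseteq> nbhd (max R R') {\<one>}" by blast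
  then show ?thesis using ball_bounded bounded_subset by blast
qed

lemma bounded_Union: "finite K \<Longrightarrow> (\<And>A. A \<in> K \<Longrightarrow> A \<in> Bo) \<Longrightarrow> \<Union>K \<in> Bo"
  by (induction K rule: finite_induct) (simp_all add: bounded_Un)

lemma nbhd_bounded: "A \<in> Bo \<Longrightarrow> nbhd r A \<in> Bo"
  unfolding bounded_iff_subset_ball
  by (meson nbhd_mono nbhd_nbhd order_refl order_trans empty_subsetI insert_subset one_closed)

lemma unbounded_iff_far: "A \<subseteq> carrier G \<Longrightarrow> A \<notin> Bo \<longleftrightarrow> (\<forall>R. \<exists>x\<in>A. R < d x \<one>)"
  unfolding bounded_iff_subset_ball nbhd_def by (auto simp: subset_iff not_le)

lemma nbhd_singleton_subset_l_coset:
  assumes g: "g \<in> carrier G" shows "nbhd r {g} \<subseteq> g <# nbhd r {\<one>}"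
proof
  fix x assume "x \<in> nbhd r {g}"
  then have x: "x \<in> carrier G" "d x g \<le> r" by (auto simp: nbhd_def)
  define h where "h = inv g \<otimes> x"
  have h: "h \<in> carrier G" "g \<otimes> h = x" using g x by (simp_all add: h_def m_assoc[symmetric])
  have "d h \<one> = d (g \<otimes> h) (g \<otimes> \<one>)" using dist_left_invariant[OF g h(1) one_closed] by simp
  with h g x have "h \<in> nbhd r {\<one>}" by (simp add: nbhd_def)
  with h(2) show "x \<in> g <# nbhd r {\<one>}" by (force simp: l_coset_def)
qed

lemma l_coset_dist:
  assumes "g \<in> carrier G" "B \<subseteq> carrier G" "x \<in> g <# B" "y \<in> g <# B"
  shows "\<exists>b\<in>B. \<exists>b'\<in>B. d x y = d b b'"
proof -
  obtain b b' where "b \<in> B" "b' \<in> B" "x = g \<otimes> b" "y = g \<otimes> b'"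
    using assms(3,4) by (auto simp: l_coset_def)
  with assms(1,2) show ?thesis by (metis dist_left_invariant subsetD)
qed

lemma nbhd_bounded_if_coarsely_clopen:
  assumes "coarsely_clopen G Bo A"
  shows "nbhd r A \<inter> nbhd r (carrier G - A) \<in> Bo"
proof -
  define \<U> where "\<U> = (\<lambda>g. nbhd r {g}) ` carrier G"
  have "\<Union>\<U> = carrier G"
    using self_in_nbhd by (auto simp: \<U>_def nbhd_def)
  moreover have "\<forall>U\<in>\<U>. \<exists>g\<in>carrier G. U \<subseteq> g <# nbhd r {\<one>}"
    using nbhd_singleton_subset_l_coset by (auto simp: \<U>_def)
  ultimately have "unif_bounded_cover G Bo \<U>"
    unfolding unif_bounded_cover_def using ball_bounded by blast
  moreover have "nbhd r A \<inter> nbhd r (carrier G - A) \<subseteq> star A \<U> \<inter> star (carrier G - A) \<U>"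
  proof
    fix z assume "z \<in> nbhd r A \<inter> nbhd r (carrier G - A)"
    then obtain a b where z: "z \<in> carrier G" and ab: "a \<in> A" "b \<in> carrier G - A" "d z a \<le> r" "d z b \<le> r"
      by (auto simp: nbhd_def)
    have "A \<subseteq> carrier G" using assms by (simp add: coarsely_clopen_def)
    with z ab have "z \<in> nbhd r {z}" "a \<in> nbhd r {z}" "b \<in> nbhd r {z}" "nbhd r {z} \<in> \<U>"
      by (auto simp: nbhd_def \<U>_def dist_commute)
    with ab show "z \<in> star A \<U> \<inter> star (carrier G - A) \<U>" by (auto simp: star_def)
  qed
  ultimately show ?thesis using assms bounded_subset by (auto simp: coarsely_clopen_def)
qed

lemma coarsely_clopenI_nbhd:
  assumes "A \<subseteq> carrier G" "\<And>r. nbhd r A \<inter> nbhd r (carrier G - A) \<in> Bo"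
  shows "coarsely_clopen G Bo A"
  unfolding coarsely_clopen_def
proof (intro conjI allI impI)
  fix \<U> assume "unif_bounded_cover G Bo \<U>"
  then obtain B where \<U>: "\<Union>\<U> = carrier G" "B \<in> Bo" "\<And>U. U \<in> \<U> \<Longrightarrow> \<exists>g\<in>carrier G. U \<subseteq> g <# B"
    by (auto simp: unif_bounded_cover_def)
  obtain D where B: "B \<subseteq> carrier G" "\<And>x y. x \<in> B \<Longrightarrow> y \<in> B \<Longrightarrow> d x y \<le> D"
    using \<U>(2) unfolding metric_bornology_def by blast
  have diam: "d x y \<le> D" if U: "U \<in> \<U>" and xy: "x \<in> U" "y \<in> U" for U x y
  proof -
    obtain g where "g \<in> carrier G" "U \<subseteq> g <# B" using \<U>(3)[OF U] by blast
    then obtain b b' where "b \<in> B" "b' \<in> B" "d x y = d b b'"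
      using l_coset_dist[OF _ B(1)] xy by blast
    then show ?thesis using B(2) by simp
  qed
  have "star A \<U> \<inter> star (carrier G - A) \<U> \<subseteq> nbhd D A \<inter> nbhd D (carrier G - A)"
  proof
    fix z assume "z \<in> star A \<U> \<inter> star (carrier G - A) \<U>"
    then obtain U U' a b where "U \<in> \<U>" "z \<in> U" "a \<in> U" "a \<in> A"
      and "U' \<in> \<U>" "z \<in> U'" "b \<in> U'" "b \<in> carrier G - A"
      by (auto simp: star_def)
    moreover from this have "z \<in> carrier G" using \<U>(1) by blast
    ultimately show "z \<in> nbhd D A \<inter> nbhd D (carrier G - A)"
      using diam unfolding nbhd_def by blast
  qed
  then show "star A \<U> \<inter> star (carrier G - A) \<U> \<in> Bo" using assms(2) bounded_subset by blast
qed (rule assms(1))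

lemma coarsely_clopen_iff_nbhd:
  "coarsely_clopen G Bo A \<longleftrightarrow> A \<subseteq> carrier G \<and> (\<forall>r. nbhd r A \<inter> nbhd r (carrier G - A) \<in> Bo)"
  using nbhd_bounded_if_coarsely_clopen coarsely_clopenI_nbhd by (auto simp: coarsely_clopen_def)

lemma coarsely_clopen_carrier: "coarsely_clopen G Bo (carrier G)"
  by (simp add: coarsely_clopen_iff_nbhd nbhd_def)

lemma coarsely_clopen_Diff:
  assumes "coarsely_clopen G Bo A" shows "coarsely_clopen G Bo (carrier G - A)"
proof -
  have "carrier G - (carrier G - A) = A" using assms by (auto simp: coarsely_clopen_def)
  with assms show ?thesis by (simp add: coarsely_clopen_iff_nbhd Int_commute)
qed

lemma coarsely_clopen_Int:
  assumes "coarsely_clopen G Bo A" "coarsely_clopen G Bo A'"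
  shows "coarsely_clopen G Bo (A \<inter> A')"
proof (rule coarsely_clopenI_nbhd)
  show "A \<inter> A' \<subseteq> carrier G" using assms by (auto simp: coarsely_clopen_def)
  fix r
  have "carrier G - A \<inter> A' = (carrier G - A) \<union> (carrier G - A')" by blast
  then have "nbhd r (A \<inter> A') \<inter> nbhd r (carrier G - A \<inter> A') \<subseteq>
      (nbhd r A \<inter> nbhd r (carrier G - A)) \<union> (nbhd r A' \<inter> nbhd r (carrier G - A'))"
    using nbhd_mono[of r r "A \<inter> A'"] by (auto simp: nbhd_Un)
  moreover have "(nbhd r A \<inter> nbhd r (carrier G - A)) \<union> (nbhd r A' \<inter> nbhd r (carrier G - A')) \<in> Bo"
    using assms by (simp add: coarsely_clopen_iff_nbhd bounded_Un)
  ultimately show "nbhd r (A \<inter> A') \<inter> nbhd r (carrier G - A \<inter> A') \<in> Bo"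
    using bounded_subset by blast
qed

lemma coarsely_clopen_Un:
  assumes "coarsely_clopen G Bo A" "coarsely_clopen G Bo A'"
  shows "coarsely_clopen G Bo (A \<union> A')"
proof -
  have "A \<union> A' = carrier G - ((carrier G - A) \<inter> (carrier G - A'))"
    using assms by (auto simp: coarsely_clopen_def)
  then show ?thesis using assms by (simp add: coarsely_clopen_Diff coarsely_clopen_Int)
qed

lemma coarsely_clopen_Union:
  "finite K \<Longrightarrow> (\<And>C. C \<in> K \<Longrightarrow> coarsely_clopen G Bo C) \<Longrightarrow> coarsely_clopen G Bo (\<Union>K)"
proof (induction K rule: finite_induct)
  case empty
  show ?case by (simp add: coarsely_clopen_iff_nbhd nbhd_def)
qed (simp add: coarsely_clopen_Un)

lemma coarsely_clopen_Union_components: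
  assumes B: "B \<in> Bo" and K: "K \<subseteq> one_components d (carrier G - B)"
  shows "coarsely_clopen G Bo (\<Union>K)"
proof (rule coarsely_clopenI_nbhd)
  show X: "\<Union>K \<subseteq> carrier G" using K component_subset by blast
  fix r
  have "nbhd r (\<Union>K) \<inter> nbhd r (carrier G - \<Union>K) \<subseteq> nbhd r B"
  proof
    fix z assume "z \<in> nbhd r (\<Union>K) \<inter> nbhd r (carrier G - \<Union>K)"
    then obtain w u where z: "z \<in> carrier G" and w: "w \<in> \<Union>K" "d z w \<le> r"
      and u: "u \<in> carrier G - \<Union>K" "d z u \<le> r"
      by (auto simp: nbhd_def)
    show "z \<in> nbhd r B"
    proof (cases "z \<in> \<Union>K")
      case True
      then obtain a b where "a \<in> \<Union>K" "b \<in> carrier G - \<Union>K" "d a b \<le> 1" "d z b \<le> d z u"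
        using exit_edge[OF True z, of u] u by blast
      then have "b \<in> B" "d z b \<le> r" using Union_components_boundary[OF K] u(2) by auto
      with z show ?thesis by (auto simp: nbhd_def)
    next
      case False
      then obtain a b where ab: "a \<in> carrier G - \<Union>K" "b \<in> \<Union>K" "d a b \<le> 1" "d z a < d z w"
        using exit_edge[of z "carrier G - \<Union>K" w] z w X by blast
      then have "d b a \<le> 1" using X dist_commute by auto
      with ab have "a \<in> B" using Union_components_boundary[OF K] by blast
      moreover have "d z a \<le> r" using ab(4) w(2) by linarith
      ultimately show ?thesis using z by (auto simp: nbhd_def)
    qed
  qed
  then show "nbhd r (\<Union>K) \<inter> nbhd r (carrier G - \<Union>K) \<in> Bo"
    using nbhd_bounded[OF B] bounded_subset by blast
qed


lemma end_memD: "is_end G Bo F \<Longrightarrow> A \<in> F \<Longrightarrow> coarsely_clopen G Bo A \<and> A \<notin> Bo"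
  unfolding is_end_def by blast

lemma end_Inter_unbounded: "is_end G Bo F \<Longrightarrow> H \<subseteq> F \<Longrightarrow> finite H \<Longrightarrow> H \<noteq> {} \<Longrightarrow> \<Inter>H \<notin> Bo"
  unfolding is_end_def unbounded_fip_def by blast

lemma end_memI:
  assumes F: "is_end G Bo F" and X: "coarsely_clopen G Bo X"
    and meets: "\<And>H. H \<subseteq> F \<Longrightarrow> finite H \<Longrightarrow> \<Inter>H \<inter> X \<notin> Bo"
  shows "X \<in> F"
proof -
  have "unbounded_fip Bo (insert X F)"
    unfolding unbounded_fip_def
  proof (intro allI impI)
    fix H assume H: "H \<subseteq> insert X F \<and> finite H \<and> H \<noteq> {}"
    show "\<Inter>H \<notin> Bo"
    proof (cases "X \<in> H")
      case True
      then have "\<Inter>H = \<Inter>(H - {X}) \<inter> X" by blast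
      with H meets[of "H - {X}"] show ?thesis by auto
    next
      case False
      with H end_Inter_unbounded[OF F] show ?thesis by blast
    qed
  qed
  moreover have "X \<notin> Bo" using meets[of "{}"] by simp
  ultimately have "insert X F = F" using F X unfolding is_end_def by blast
  then show ?thesis by blast
qed

lemma exists_end_superset:
  assumes "F0 \<subseteq> {A. coarsely_clopen G Bo A \<and> A \<notin> Bo}" "unbounded_fip Bo F0"
  obtains F where "is_end G Bo F" "F0 \<subseteq> F"
proof -
  define \<A> where "\<A> = {F. F0 \<subseteq> F \<and> F \<subseteq> {A. coarsely_clopen G Bo A \<and> A \<notin> Bo} \<and> unbounded_fip Bo F}"
  have "\<exists>M\<in>\<A>. \<forall>X\<in>\<A>. M \<subseteq> X \<longrightarrow> X = M"
  proof (rule subset_Zorn_nonempty)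
    have "F0 \<in> \<A>" using assms by (simp add: \<A>_def)
    then show "\<A> \<noteq> {}" by blast
    fix \<C> assume \<C>: "\<C> \<noteq> {}" "subset.chain \<A> \<C>"
    then have \<C>\<A>: "\<C> \<subseteq> \<A>" by (simp add: subset.chain_def)
    have "unbounded_fip Bo (\<Union>\<C>)"
      unfolding unbounded_fip_def
    proof (intro allI impI)
      fix H assume H: "H \<subseteq> \<Union>\<C> \<and> finite H \<and> H \<noteq> {}"
      then have "finite H" "H \<subseteq> \<Union>\<C>" by simp_all
      then obtain X where "X \<in> \<C>" "H \<subseteq> X" by (rule finite_subset_Union_chain[OF _ _ \<C>])
      moreover have "unbounded_fip Bo X" using \<open>X \<in> \<C>\<close> \<C>\<A> by (auto simp: \<A>_def)
      ultimately show "\<Inter>H \<notin> Bo" using H by (simp add: unbounded_fip_def)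
    qed
    moreover have "F0 \<subseteq> \<Union>\<C>" using \<C>(1) \<C>\<A> by (auto simp: \<A>_def)
    moreover have "\<Union>\<C> \<subseteq> {A. coarsely_clopen G Bo A \<and> A \<notin> Bo}" using \<C>\<A> by (auto simp: \<A>_def)
    ultimately show "\<Union>\<C> \<in> \<A>" by (simp add: \<A>_def)
  qed
  then obtain M where "M \<in> \<A>" "\<And>X. X \<in> \<A> \<Longrightarrow> M \<subseteq> X \<Longrightarrow> X = M" by blast
  then have "is_end G Bo M" "F0 \<subseteq> M" unfolding is_end_def \<A>_def by auto
  then show thesis by (rule that)
qed

lemma end_Int: "is_end G Bo F \<Longrightarrow> A \<in> F \<Longrightarrow> A' \<in> F \<Longrightarrow> A \<inter> A' \<in> F"
proof (rule end_memI)
  assume F: "is_end G Bo F" and A: "A \<in> F" "A' \<in> F"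
  then show "coarsely_clopen G Bo (A \<inter> A')" using end_memD coarsely_clopen_Int by blast
  fix H assume "H \<subseteq> F" "finite H"
  with F A have "\<Inter>(insert A (insert A' H)) \<notin> Bo" by (intro end_Inter_unbounded) auto
  then show "\<Inter>H \<inter> (A \<inter> A') \<notin> Bo" by (simp add: Int_ac)
qed

lemma end_upward:
  assumes F: "is_end G Bo F" and A: "A \<in> F" and A': "coarsely_clopen G Bo A'" and "A - A' \<in> Bo"
  shows "A' \<in> F"
proof (rule end_memI[OF F A'])
  fix H assume H: "H \<subseteq> F" "finite H"
  show "\<Inter>H \<inter> A' \<notin> Bo"
  proof
    assume "\<Inter>H \<inter> A' \<in> Bo"
    then have "(\<Inter>H \<inter> A') \<union> (A - A') \<in> Bo" using assms(4) bounded_Un by blast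
    moreover have "\<Inter>(insert A H) \<subseteq> (\<Inter>H \<inter> A') \<union> (A - A')" by blast
    moreover have "\<Inter>(insert A H) \<notin> Bo" using F A H by (intro end_Inter_unbounded) auto
    ultimately show False using bounded_subset by blast
  qed
qed

lemma end_Un_cases:
  assumes F: "is_end G Bo F" and "A \<union> A' \<in> F" "coarsely_clopen G Bo A" "coarsely_clopen G Bo A'"
  shows "A \<in> F \<or> A' \<in> F"
proof (rule ccontr)
  assume "\<not> ?thesis"
  then obtain H H' where H: "H \<subseteq> F" "finite H" "\<Inter>H \<inter> A \<in> Bo"
    and H': "H' \<subseteq> F" "finite H'" "\<Inter>H' \<inter> A' \<in> Bo"
    using end_memI[OF F] assms(3,4) by metis
  have "\<Inter>(insert (A \<union> A') (H \<union> H')) \<subseteq> (\<Inter>H \<inter> A) \<union> (\<Inter>H' \<inter> A')" by blast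
  moreover have "\<Inter>(insert (A \<union> A') (H \<union> H')) \<notin> Bo"
    using F assms(2) H H' by (intro end_Inter_unbounded) auto
  ultimately show False using H(3) H'(3) bounded_Un bounded_subset by blast
qed

lemma end_Union_cases:
  assumes F: "is_end G Bo F" and "finite K" "\<And>C. C \<in> K \<Longrightarrow> coarsely_clopen G Bo C" "\<Union>K \<in> F"
  shows "\<exists>C\<in>K. C \<in> F"
  using assms(2-4)
proof (induction K rule: finite_induct)
  case empty
  then show ?case using end_memD[OF F, of "{}"] by simp
next
  case (insert C K)
  have "coarsely_clopen G Bo C" "coarsely_clopen G Bo (\<Union>K)"
    using insert.prems(1) coarsely_clopen_Union[OF insert.hyps(1)] by auto
  moreover have "C \<union> \<Union>K \<in> F" using insert.prems(2) by simp
  ultimately have "C \<in> F \<or> \<Union>K \<in> F" using end_Un_cases[OF F] by blast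
  then show ?case
  proof
    assume "\<Union>K \<in> F"
    then show ?case using insert.IH insert.prems(1) by blast
  qed blast
qed

lemma end_carrier:
  assumes "carrier G \<notin> Bo" "is_end G Bo F" shows "carrier G \<in> F"
proof (rule end_memI[OF assms(2) coarsely_clopen_carrier])
  fix H assume H: "H \<subseteq> F" "finite H"
  show "\<Inter>H \<inter> carrier G \<notin> Bo"
  proof (cases "H = {}")
    case False
    then obtain A where "A \<in> H" by blast
    moreover have "A \<subseteq> carrier G"
      using end_memD[OF assms(2), of A] \<open>A \<in> H\<close> H(1) by (auto simp: coarsely_clopen_def)
    ultimately have "\<Inter>H \<subseteq> carrier G" by blast
    with end_Inter_unbounded[OF assms(2) H False] show ?thesis by (simp add: Int_absorb2)
  qed (simp add: assms(1))
qed

lemma end_unique_component: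
  assumes "is_end G Bo F" "S \<subseteq> carrier G" "C \<in> one_components d S" "C' \<in> one_components d S"
    "C \<in> F" "C' \<in> F"
  shows "C = C'"
proof (rule ccontr)
  assume "C \<noteq> C'"
  then have "C \<inter> C' = {}" using components_disjoint assms(2-4) by blast
  then show False using end_Int[OF assms(1,5,6)] end_memD[OF assms(1)] by fastforce
qed

lemma diff_bounded_if_end_nbhd_subset:
  assumes U: "coarsely_clopen G Bo U" and A: "coarsely_clopen G Bo A"
    and sub: "end_nbhd G Bo U \<subseteq> end_nbhd G Bo A"
  shows "U - A \<in> Bo"
proof (rule ccontr)
  assume unbounded: "U - A \<notin> Bo"
  have "U - A = U \<inter> (carrier G - A)" using U by (auto simp: coarsely_clopen_def)
  then have "coarsely_clopen G Bo (U - A)"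
    using coarsely_clopen_Int[OF U coarsely_clopen_Diff[OF A]] by simp
  with unbounded have "{U - A} \<subseteq> {A. coarsely_clopen G Bo A \<and> A \<notin> Bo}" by simp
  moreover have "unbounded_fip Bo {U - A}"
    using unbounded by (auto simp: unbounded_fip_def subset_singleton_iff)
  ultimately obtain F where F: "is_end G Bo F" "{U - A} \<subseteq> F" by (rule exists_end_superset)
  then have UA: "U - A \<in> F" by simp
  have "U - A - U = {}" by blast
  then have "U - A - U \<in> Bo" by (simp only: empty_bounded)
  then have "U \<in> F" by (rule end_upward[OF F(1) UA U])
  moreover have "A \<notin> F"
  proof
    assume "A \<in> F"
    then have "(U - A) \<inter> A \<in> F" using end_Int[OF F(1) UA] by blast
    moreover have "(U - A) \<inter> A = {}" by blast
    ultimately show False using end_memD[OF F(1), of "{}"] by simp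
  qed
  ultimately show False using sub F(1) by (auto simp: end_nbhd_def Ends_def)
qed

lemma exists_end_containing_decseq:
  assumes "decseq A" "\<And>m. coarsely_clopen G Bo (A m)" "\<And>m. A m \<notin> Bo"
  obtains F where "is_end G Bo F" "\<And>m. A m \<in> F"
proof -
  have "range A \<subseteq> {A. coarsely_clopen G Bo A \<and> A \<notin> Bo}" using assms(2,3) by blast
  moreover have "unbounded_fip Bo (range A)"
    unfolding unbounded_fip_def
  proof (intro allI impI)
    fix H assume "H \<subseteq> range A \<and> finite H \<and> H \<noteq> {}"
    then obtain M where M: "finite M" "M \<noteq> {}" "H = A ` M"
      by (metis finite_subset_image image_empty)
    have "A (Max M) \<subseteq> A m" if "m \<in> M" for m
      using decseqD[OF assms(1) Max_ge[OF M(1) that]] .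
    then have "A (Max M) \<subseteq> \<Inter>H" using M(3) by blast
    then show "\<Inter>H \<notin> Bo" using assms(3) bounded_subset by blast
  qed
  ultimately obtain F where "is_end G Bo F" "range A \<subseteq> F" by (rule exists_end_superset)
  then show thesis using that by blast
qed


lemma end_nbhd_Int:
  assumes "coarsely_clopen G Bo U" "coarsely_clopen G Bo U'"
  shows "end_nbhd G Bo (U \<inter> U') = end_nbhd G Bo U \<inter> end_nbhd G Bo U'"
proof
  show "end_nbhd G Bo (U \<inter> U') \<subseteq> end_nbhd G Bo U \<inter> end_nbhd G Bo U'"
  proof
    fix F assume "F \<in> end_nbhd G Bo (U \<inter> U')"
    then have F: "is_end G Bo F" "U \<inter> U' \<in> F" by (auto simp: end_nbhd_def Ends_def)
    have "U \<inter> U' - U \<in> Bo" "U \<inter> U' - U' \<in> Bo" by (simp_all add: Diff_eq Int_ac)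
    then have "U \<in> F" "U' \<in> F" using end_upward[OF F] assms by blast+
    with F(1) show "F \<in> end_nbhd G Bo U \<inter> end_nbhd G Bo U'" by (simp add: end_nbhd_def Ends_def)
  qed
  show "end_nbhd G Bo U \<inter> end_nbhd G Bo U' \<subseteq> end_nbhd G Bo (U \<inter> U')"
    using end_Int by (auto simp: end_nbhd_def Ends_def)
qed

lemma openin_end_nbhd: "coarsely_clopen G Bo U \<Longrightarrow> openin (ends_topology G Bo) (end_nbhd G Bo U)"
  unfolding ends_topology_def by (rule topology_generated_by_Basis) blast

lemma openin_ends_topology_imp_basic:
  assumes "openin (ends_topology G Bo) W" "F \<in> W"
  shows "\<exists>U. coarsely_clopen G Bo U \<and> F \<in> end_nbhd G Bo U \<and> end_nbhd G Bo U \<subseteq> W"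
proof -
  have "generate_topology_on {end_nbhd G Bo U | U. coarsely_clopen G Bo U} W"
    using assms(1) unfolding ends_topology_def by (rule openin_topology_generated_by)
  then show ?thesis using assms(2)
  proof (induction arbitrary: F)
    case (Int W W')
    then obtain U U' where "coarsely_clopen G Bo U" "F \<in> end_nbhd G Bo U" "end_nbhd G Bo U \<subseteq> W"
      and "coarsely_clopen G Bo U'" "F \<in> end_nbhd G Bo U'" "end_nbhd G Bo U' \<subseteq> W'"
      by (meson IntD1 IntD2)
    then show ?case using end_nbhd_Int coarsely_clopen_Int by (intro exI[of _ "U \<inter> U'"]) auto
  next
    case (UN \<W>)
    then obtain W where "W \<in> \<W>" "F \<in> W" by blast
    with UN.IH show ?case by blast
  qed auto
qed

lemma countable_basic_nbhd_base:
  assumes "first_countable (ends_topology G Bo)" "F \<in> topspace (ends_topology G Bo)"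
  obtains \<U> where "countable \<U>" "\<And>U. U \<in> \<U> \<Longrightarrow> coarsely_clopen G Bo U \<and> U \<in> F"
    "\<And>W. openin (ends_topology G Bo) W \<Longrightarrow> F \<in> W \<Longrightarrow> \<exists>U\<in>\<U>. end_nbhd G Bo U \<subseteq> W"
proof -
  obtain \<B> where \<B>: "countable \<B>" "\<And>Q. Q \<in> \<B> \<Longrightarrow> openin (ends_topology G Bo) Q"
    "\<And>W. openin (ends_topology G Bo) W \<Longrightarrow> F \<in> W \<Longrightarrow> \<exists>Q\<in>\<B>. F \<in> Q \<and> Q \<subseteq> W"
    using assms unfolding first_countable_def by metis
  have "\<forall>Q\<in>{Q \<in> \<B>. F \<in> Q}. \<exists>U. coarsely_clopen G Bo U \<and> F \<in> end_nbhd G Bo U \<and> end_nbhd G Bo U \<subseteq> Q"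
    using \<B>(2) openin_ends_topology_imp_basic by blast
  then obtain u where u: "\<And>Q. Q \<in> {Q \<in> \<B>. F \<in> Q} \<Longrightarrow>
      coarsely_clopen G Bo (u Q) \<and> F \<in> end_nbhd G Bo (u Q) \<and> end_nbhd G Bo (u Q) \<subseteq> Q"
    by metis
  show thesis
  proof (rule that[of "u ` {Q \<in> \<B>. F \<in> Q}"])
    show "countable (u ` {Q \<in> \<B>. F \<in> Q})" using \<B>(1) by simp
    show "coarsely_clopen G Bo U \<and> U \<in> F" if "U \<in> u ` {Q \<in> \<B>. F \<in> Q}" for U
      using that u by (auto simp: end_nbhd_def)
    show "\<exists>U\<in>u ` {Q \<in> \<B>. F \<in> Q}. end_nbhd G Bo U \<subseteq> W"
      if W: "openin (ends_topology G Bo) W" "F \<in> W" for W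
    proof -
      obtain Q where "Q \<in> \<B>" "F \<in> Q" "Q \<subseteq> W" using \<B>(3)[OF W] by blast
      then show ?thesis using u[of Q] by blast
    qed
  qed
qed

section \<open>Non-metrizability\<close>

lemma split_unbounded_tails:
  fixes c :: "nat \<Rightarrow> 'a set"
  assumes "countable \<S>" and c: "\<And>n. c n \<subseteq> carrier G"
    and tails: "\<And>S m. S \<in> \<S> \<Longrightarrow> S \<inter> \<Union>(c ` {m..}) \<notin> Bo"
  obtains I where "\<And>S. S \<in> \<S> \<Longrightarrow> S \<inter> \<Union>(c ` I) \<notin> Bo \<and> S \<inter> \<Union>(c ` (- I)) \<notin> Bo"
proof -
  define far where "far S R = {n. \<exists>x\<in>S \<inter> c n. R < d x \<one>}" for S R
  have sub: "S \<inter> \<Union>(c ` J) \<subseteq> carrier G" for S J using c by blast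
  have unbounded_if_far: "S \<inter> \<Union>(c ` J) \<notin> Bo" if J: "\<And>R. far S R \<inter> J \<noteq> {}" for S J
  proof -
    have "\<exists>x\<in>S \<inter> \<Union>(c ` J). R < d x \<one>" for R
    proof -
      obtain n where "n \<in> J" "n \<in> far S R" using J[of R] by blast
      then show ?thesis by (auto simp: far_def)
    qed
    then show ?thesis by (simp add: unbounded_iff_far[OF sub])
  qed
  have infinite_far: "infinite (far S R)" if S: "S \<in> \<S>" for S R
    unfolding infinite_nat_iff_unbounded_le
  proof
    fix m
    have "S \<inter> \<Union>(c ` {m..}) \<notin> Bo" by (rule tails[OF S])
    then obtain x where x: "x \<in> S \<inter> \<Union>(c ` {m..})" "R < d x \<one>"
      unfolding unbounded_iff_far[OF sub] by blast
    then obtain n where "n \<ge> m" "x \<in> S" "x \<in> c n" by blast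
    then show "\<exists>n\<ge>m. n \<in> far S R" using x(2) unfolding far_def by blast
  qed
  define \<N> where "\<N> = (\<lambda>(S, R). far S R) ` (\<S> \<times> UNIV)"
  have "countable \<N>" using assms(1) by (simp add: \<N>_def)
  moreover have "infinite N" if "N \<in> \<N>" for N using that infinite_far by (auto simp: \<N>_def)
  ultimately obtain I where I: "\<forall>N\<in>\<N>. N \<inter> I \<noteq> {} \<and> N - I \<noteq> {}"
    using split_infinite_sets by metis
  show thesis
  proof (rule that[of I])
    fix S assume "S \<in> \<S>"
    then have "far S R \<in> \<N>" for R by (auto simp: \<N>_def intro!: image_eqI[of _ _ "(S, R)"])
    then have "far S R \<inter> I \<noteq> {}" "far S R \<inter> - I \<noteq> {}" for R using I by (auto simp: Diff_eq)
    then show "S \<inter> \<Union>(c ` I) \<notin> Bo \<and> S \<inter> \<Union>(c ` (- I)) \<notin> Bo"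
      using unbounded_if_far by blast
  qed
qed

lemma exists_base_nbhd_diff_bounded:
  assumes F: "is_end G Bo F" and A: "A \<in> F"
    and \<U>: "\<And>U. U \<in> \<U> \<Longrightarrow> coarsely_clopen G Bo U"
    and base: "\<And>W. openin (ends_topology G Bo) W \<Longrightarrow> F \<in> W \<Longrightarrow> \<exists>U\<in>\<U>. end_nbhd G Bo U \<subseteq> W"
  shows "\<exists>U\<in>\<U>. U - A \<in> Bo"
proof -
  have A_cc: "coarsely_clopen G Bo A" using end_memD[OF F A] by blast
  moreover have "F \<in> end_nbhd G Bo A" using F A by (simp add: end_nbhd_def Ends_def)
  ultimately obtain U where "U \<in> \<U>" "end_nbhd G Bo U \<subseteq> end_nbhd G Bo A"
    using base[OF openin_end_nbhd] by blast
  then show ?thesis using diff_bounded_if_end_nbhd_subset[OF \<U> A_cc] by blast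
qed

lemma not_metrizable_ends_if_disjoint_components:
  fixes c :: "nat \<Rightarrow> 'a set"
  assumes B: "B \<in> Bo" and comp: "\<And>n. c n \<in> one_components d (carrier G - B)"
    and disj: "disjoint_family c" and tails: "\<And>m. \<Union>(c ` {m..}) \<notin> Bo"
  shows "\<not> metrizable_space (ends_topology G Bo)"
proof
  assume "metrizable_space (ends_topology G Bo)"
  then have countable: "first_countable (ends_topology G Bo)" by (rule metrizable_imp_first_countable)
  define W where "W I = \<Union>(c ` I)" for I
  have W_cc: "coarsely_clopen G Bo (W I)" for I
    unfolding W_def by (rule coarsely_clopen_Union_components[OF B]) (use comp in blast)
  have "decseq (\<lambda>m. W {m..})" unfolding W_def by (intro decseq_SucI Union_mono image_mono) auto
  then obtain F where F: "is_end G Bo F" "\<And>m. W {m..} \<in> F"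
    using exists_end_containing_decseq W_cc tails unfolding W_def by metis
  then have "F \<in> topspace (ends_topology G Bo)"
    using openin_subset[OF openin_end_nbhd[OF W_cc]] by (auto simp: end_nbhd_def Ends_def)
  then obtain \<U> where \<U>: "countable \<U>" "\<And>U. U \<in> \<U> \<Longrightarrow> coarsely_clopen G Bo U \<and> U \<in> F"
    "\<And>W. openin (ends_topology G Bo) W \<Longrightarrow> F \<in> W \<Longrightarrow> \<exists>U\<in>\<U>. end_nbhd G Bo U \<subseteq> W"
    using countable_basic_nbhd_base[OF countable] by metis
  have "U \<inter> \<Union>(c ` {m..}) \<notin> Bo" if "U \<in> \<U>" for U m
    using end_memD[OF F(1) end_Int[OF F(1)]] \<U>(2)[OF that] F(2)[of m] by (simp add: W_def)
  then obtain I where I: "\<And>U. U \<in> \<U> \<Longrightarrow> U \<inter> W I \<notin> Bo \<and> U \<inter> W (- I) \<notin> Bo"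
    using split_unbounded_tails[OF \<U>(1), of c] comp component_subset unfolding W_def by blast
  have no_half: False if J: "W J \<in> F" "\<And>U. U \<in> \<U> \<Longrightarrow> U \<inter> W (- J) \<notin> Bo" for J
  proof -
    have "\<And>U. U \<in> \<U> \<Longrightarrow> coarsely_clopen G Bo U" using \<U>(2) by blast
    then obtain U where U: "U \<in> \<U>" "U - W J \<in> Bo"
      using exists_base_nbhd_diff_bounded[OF F(1) J(1) _ \<U>(3)] by blast
    have "W J \<inter> W (- J) = {}"
    proof (rule equals0I)
      fix x assume "x \<in> W J \<inter> W (- J)"
      then obtain i j where "i \<in> J" "x \<in> c i" "j \<notin> J" "x \<in> c j" unfolding W_def by blast
      then have "i \<noteq> j" "x \<in> c i \<inter> c j" by auto
      with disjoint_family_onD[OF disj] show False by blast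
    qed
    then have "U \<inter> W (- J) \<subseteq> U - W J" by blast
    then show False using J(2)[OF U(1)] U(2) bounded_subset by blast
  qed
  have "W I \<union> W (- I) = W UNIV" unfolding W_def by blast
  then have "W I \<union> W (- I) \<in> F" using F(2)[of 0] by simp
  then have "W I \<in> F \<or> W (- I) \<in> F" using end_Un_cases[OF F(1)] W_cc by blast
  then show False
  proof
    assume "W I \<in> F"
    then show False by (rule no_half) (use I in blast)
  next
    assume "W (- I) \<in> F"
    then show False by (rule no_half) (use I in simp)
  qed
qed

lemma disjoint_components_with_unbounded_tails:
  assumes K: "K \<subseteq> one_components d (carrier G - B)" "countable K"
    and cofinite_unbounded: "\<And>K0. finite K0 \<Longrightarrow> \<Union>(K - K0) \<notin> Bo"
  obtains c :: "nat \<Rightarrow> 'a set" where "\<And>n. c n \<in> one_components d (carrier G - B)"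
    "disjoint_family c" "\<And>m. \<Union>(c ` {m..}) \<notin> Bo"
proof -
  have "infinite K" using cofinite_unbounded[of K] by auto
  define c where "c = from_nat_into K"
  have "bij_betw c UNIV K" unfolding c_def by (rule bij_betw_from_nat_into[OF K(2) \<open>infinite K\<close>])
  then have inj: "inj c" and range: "range c = K" by (simp_all add: bij_betw_def)
  show thesis
  proof (rule that)
    show comp: "c n \<in> one_components d (carrier G - B)" for n using range K(1) by blast
    show "disjoint_family c" unfolding disjoint_family_on_def
    proof (intro ballI impI)
      fix m n :: nat assume "m \<noteq> n"
      then have "c m \<noteq> c n" using inj by (simp add: inj_eq)
      then show "c m \<inter> c n = {}" using components_disjoint[OF _ comp comp] by blast
    qed
    show "\<Union>(c ` {m..}) \<notin> Bo" for m
    proof -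
      have "UNIV - {..<m} = {m..}" by auto
      then have "c ` {m..} = K - c ` {..<m}" using image_set_diff[OF inj, of UNIV "{..<m}"] range by simp
      then show ?thesis using cofinite_unbounded[of "c ` {..<m}"] by simp
    qed
  qed
qed

lemma not_metrizable_ends_if_unbounded_Union_bounded_components:
  assumes B: "B \<in> Bo" and unbounded: "\<Union>{C \<in> one_components d (carrier G - B). C \<in> Bo} \<notin> Bo"
  shows "\<not> metrizable_space (ends_topology G Bo)"
proof -
  define K where "K = {C \<in> one_components d (carrier G - B). C \<in> Bo}"
  have "\<Union>K \<subseteq> carrier G" using component_subset by (fastforce simp: K_def)
  with unbounded have "\<forall>R. \<exists>x\<in>\<Union>K. R < d x \<one>" unfolding K_def by (simp add: unbounded_iff_far)
  then have "\<forall>n. \<exists>C. C \<in> K \<and> (\<exists>x\<in>C. n < d x \<one>)" by blast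
  then have "\<exists>g. \<forall>n. g n \<in> K \<and> (\<exists>x\<in>g n. n < d x \<one>)" by (rule choice)
  then obtain g where g: "\<And>n. g n \<in> K" "\<And>n. \<exists>x\<in>g n. n < d x \<one>" by blast
  have "\<Union>(range g - K0) \<notin> Bo" if "finite K0" for K0
  proof
    assume "\<Union>(range g - K0) \<in> Bo"
    moreover have "\<Union>(range g \<inter> K0) \<in> Bo" using bounded_Union[of "range g \<inter> K0"] that g(1)
      by (auto simp: K_def)
    moreover have "\<Union>(range g) = \<Union>(range g - K0) \<union> \<Union>(range g \<inter> K0)" by blast
    ultimately have "\<Union>(range g) \<in> Bo" using bounded_Un by simp
    then obtain R where R: "\<Union>(range g) \<subseteq> nbhd R {\<one>}" by (auto simp: bounded_iff_subset_ball)
    obtain x where "x \<in> g R" "R < d x \<one>" using g(2) by blast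
    with R show False by (force simp: nbhd_def)
  qed
  moreover have "range g \<subseteq> one_components d (carrier G - B)" using g(1) by (auto simp: K_def)
  moreover have "countable (range g)" by simp
  ultimately obtain c :: "nat \<Rightarrow> 'a set" where "\<And>n. c n \<in> one_components d (carrier G - B)"
    "disjoint_family c" "\<And>m. \<Union>(c ` {m..}) \<notin> Bo"
    using disjoint_components_with_unbounded_tails by metis
  then show ?thesis by (rule not_metrizable_ends_if_disjoint_components[OF B])
qed

lemma not_metrizable_ends_if_infinitely_many_unbounded_components:
  assumes B: "B \<in> Bo" and "infinite {C \<in> one_components d (carrier G - B). C \<notin> Bo}"
  shows "\<not> metrizable_space (ends_topology G Bo)"
proof -
  obtain K where K: "K \<subseteq> {C \<in> one_components d (carrier G - B). C \<notin> Bo}" "countable K" "infinite K"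
    using infinite_countable_subset'[OF assms(2)] by blast
  have "\<Union>(K - K0) \<notin> Bo" if K0: "finite K0" for K0
  proof -
    obtain C where "C \<in> K - K0" using infinite_imp_nonempty[OF Diff_infinite_finite[OF K0 K(3)]] by blast
    moreover from this have "C \<notin> Bo" using K(1) by blast
    ultimately show ?thesis using bounded_subset[of "\<Union>(K - K0)" C] by blast
  qed
  moreover have "K \<subseteq> one_components d (carrier G - B)" using K(1) by blast
  ultimately obtain c :: "nat \<Rightarrow> 'a set" where "\<And>n. c n \<in> one_components d (carrier G - B)"
    "disjoint_family c" "\<And>m. \<Union>(c ` {m..}) \<notin> Bo"
    using disjoint_components_with_unbounded_tails K(2) by metis
  then show ?thesis by (rule not_metrizable_ends_if_disjoint_components[OF B])
qed

section \<open>Metrizability\<close>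

lemma metrizable_ends_if_bounded:
  assumes "carrier G \<in> Bo" shows "metrizable_space (ends_topology G Bo)"
proof -
  have "U \<notin> F" if F: "is_end G Bo F" for U F
  proof
    assume "U \<in> F"
    then have "U \<subseteq> carrier G" "U \<notin> Bo" using end_memD[OF F] by (auto simp: coarsely_clopen_def)
    then show False using bounded_subset[OF assms] by blast
  qed
  then have "end_nbhd G Bo U = {}" for U by (auto simp: end_nbhd_def Ends_def)
  then have "topspace (ends_topology G Bo) = {}" by (simp add: ends_topology_def)
  then show ?thesis using empty_metrizable_space by simp
qed

definition level_components :: "nat \<Rightarrow> 'a set set" where
  "level_components n = one_components d (carrier G - nbhd n {\<one>})"

definition level_saturated :: "nat \<Rightarrow> 'a set \<Rightarrow> bool" where
  "level_saturated n A \<longleftrightarrow> (\<forall>C\<in>level_components n. C \<subseteq> A \<or> C \<inter> A = {})"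

lemma coarsely_clopen_level_saturated:
  assumes "coarsely_clopen G Bo A"
  obtains n where "level_saturated n A"
proof -
  obtain R where R: "nbhd 1 A \<inter> nbhd 1 (carrier G - A) \<subseteq> nbhd R {\<one>}"
    using nbhd_bounded_if_coarsely_clopen[OF assms] bounded_iff_subset_ball by blast
  have "level_saturated R A"
    unfolding level_saturated_def level_components_def
  proof
    fix C assume C: "C \<in> one_components d (carrier G - nbhd R {\<one>})"
    show "C \<subseteq> A \<or> C \<inter> A = {}"
    proof (rule component_subset_or_disjoint[OF _ C])
      fix x y assume x: "x \<in> C \<inter> A" and y: "y \<in> C - A"
      have xy: "x \<in> carrier G - nbhd R {\<one>}" "y \<in> carrier G" using component_subset[OF C] x y by auto
      show "1 < d x y"
      proof (rule ccontr)
        assume "\<not> 1 < d x y"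
        then have "d x y \<le> 1" by simp
        moreover have "d x x \<le> 1" using xy by simp
        ultimately have "x \<in> nbhd 1 A \<inter> nbhd 1 (carrier G - A)" using x y xy unfolding nbhd_def by blast
        with R xy show False by blast
      qed
    qed blast
  qed
  then show thesis by (rule that)
qed

end

locale tame_complements = cayley_graph +
  assumes unbounded_carrier: "carrier G \<notin> metric_bornology G d"
    and bounded_components_bounded: "\<And>B. B \<in> metric_bornology G d \<Longrightarrow>
      \<Union>{C \<in> one_components d (carrier G - B). C \<in> metric_bornology G d} \<in> metric_bornology G d"
    and finite_unbounded_components: "\<And>B. B \<in> metric_bornology G d \<Longrightarrow>
      finite {C \<in> one_components d (carrier G - B). C \<notin> metric_bornology G d}"
begin

lemma level_component_coarsely_clopen: "C \<in> level_components n \<Longrightarrow> coarsely_clopen G Bo C"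
  using coarsely_clopen_Union_components[OF ball_bounded, of "{C}"] by (simp add: level_components_def)

lemma end_contains_level_component:
  assumes F: "is_end G Bo F" and A: "A \<in> F" and sat: "level_saturated n A"
  shows "\<exists>C\<in>level_components n. C \<subseteq> A \<and> C \<in> F"
proof -
  define K where "K = {C \<in> level_components n. C \<notin> Bo \<and> C \<subseteq> A}"
  have K: "K \<subseteq> one_components d (carrier G - nbhd n {\<one>})" by (auto simp: K_def level_components_def)
  have "A - \<Union>K \<subseteq> nbhd n {\<one>} \<union> \<Union>{C \<in> level_components n. C \<in> Bo}"
  proof
    fix x assume x: "x \<in> A - \<Union>K"
    show "x \<in> nbhd n {\<one>} \<union> \<Union>{C \<in> level_components n. C \<in> Bo}"
    proof (cases "x \<in> nbhd n {\<one>}")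
      case False
      have "x \<in> carrier G" using x end_memD[OF F A] by (auto simp: coarsely_clopen_def)
      with False obtain C where C: "C \<in> level_components n" "x \<in> C"
        using in_component unfolding level_components_def by blast
      then have "C \<subseteq> A" using sat x unfolding level_saturated_def by blast
      with C x have "C \<in> Bo" unfolding K_def by blast
      with C show ?thesis by blast
    qed simp
  qed
  moreover have "nbhd n {\<one>} \<union> \<Union>{C \<in> level_components n. C \<in> Bo} \<in> Bo"
    using bounded_Un[OF ball_bounded bounded_components_bounded[OF ball_bounded]]
    by (simp add: level_components_def)
  ultimately have "A - \<Union>K \<in> Bo" using bounded_subset by blast
  then have "\<Union>K \<in> F" by (rule end_upward[OF F A coarsely_clopen_Union_components[OF ball_bounded K]])
  moreover have "finite K"
    using finite_unbounded_components[OF ball_bounded, of n]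
    by (rule finite_subset[rotated]) (auto simp: K_def level_components_def)
  ultimately obtain C where "C \<in> K" "C \<in> F"
    using end_Union_cases[OF F] level_component_coarsely_clopen by (metis (no_types, lifting) K_def mem_Collect_eq)
  then show ?thesis by (auto simp: K_def)
qed

definition end_component :: "'a set set \<Rightarrow> nat \<Rightarrow> 'a set" where
  "end_component F n = (THE C. C \<in> level_components n \<and> C \<in> F)"

lemma end_component_eqI:
  assumes F: "is_end G Bo F" and C: "C \<in> level_components n" "C \<in> F"
  shows "end_component F n = C"
  unfolding end_component_def
proof (rule the_equality)
  fix C' assume "C' \<in> level_components n \<and> C' \<in> F"
  then show "C' = C" using end_unique_component[OF F _ _ C(1)[unfolded level_components_def] _ C(2)]
    by (auto simp: level_components_def)
qed (use C in blast)

lemma end_component: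
  assumes F: "is_end G Bo F"
  shows "end_component F n \<in> level_components n" "end_component F n \<in> F"
proof -
  have "level_saturated n (carrier G)"
    by (auto simp: level_saturated_def level_components_def dest: component_subset)
  then obtain C where "C \<in> level_components n" "C \<in> F"
    using end_contains_level_component[OF F end_carrier[OF unbounded_carrier F]] by blast
  with end_component_eqI[OF F] show "end_component F n \<in> level_components n" "end_component F n \<in> F"
    by simp_all
qed

lemma end_mem_iff_end_component_subset:
  assumes F: "is_end G Bo F" and A: "coarsely_clopen G Bo A" "level_saturated n A"
  shows "A \<in> F \<longleftrightarrow> end_component F n \<subseteq> A"
proof
  assume "A \<in> F"
  then obtain C where "C \<in> level_components n" "C \<subseteq> A" "C \<in> F"
    using end_contains_level_component[OF F _ A(2)] by blast
  then show "end_component F n \<subseteq> A" using end_component_eqI[OF F] by simp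
next
  assume "end_component F n \<subseteq> A"
  then have "end_component F n - A = {}" by blast
  then have "end_component F n - A \<in> Bo" by (simp only: empty_bounded)
  then show "A \<in> F" by (rule end_upward[OF F end_component(2)[OF F] A(1)])
qed

lemma ends_eqI:
  assumes F: "is_end G Bo F" and F': "is_end G Bo F'"
    and same: "\<And>n. end_component F n = end_component F' n"
  shows "F = F'"
proof -
  have "A \<in> F \<longleftrightarrow> A \<in> F'" for A
  proof (cases "coarsely_clopen G Bo A")
    case True
    then obtain n where "level_saturated n A" by (rule coarsely_clopen_level_saturated)
    with True show ?thesis
      using end_mem_iff_end_component_subset[OF F] end_mem_iff_end_component_subset[OF F'] same by simp
  qed (use end_memD F F' in blast)
  then show ?thesis by blast
qed

definition ends_dist :: "'a set set \<Rightarrow> 'a set set \<Rightarrow> real" where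
  "ends_dist = first_difference_dist end_component"

lemma Metric_space_ends_dist: "Metric_space (Ends G Bo) ends_dist"
  unfolding ends_dist_def
  by (rule Metric_space_first_difference_dist, rule ends_eqI) (auto simp: Ends_def)

sublocale ends: Metric_space "Ends G Bo" ends_dist
  by (rule Metric_space_ends_dist)

lemma ends_dist_less_inverse_iff:
  "ends_dist F F' < inverse (real (Suc n)) \<longleftrightarrow> (\<forall>m\<le>n. end_component F' m = end_component F m)"
  unfolding ends_dist_def first_difference_dist_less_inverse_iff by auto

lemma topspace_ends_topology: "topspace (ends_topology G Bo) = Ends G Bo"
proof
  show "topspace (ends_topology G Bo) \<subseteq> Ends G Bo"
    by (auto simp: ends_topology_def end_nbhd_def)
  show "Ends G Bo \<subseteq> topspace (ends_topology G Bo)"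
    using openin_subset[OF openin_end_nbhd[OF coarsely_clopen_carrier]] end_carrier[OF unbounded_carrier]
    by (auto simp: end_nbhd_def Ends_def)
qed

lemma openin_end_cylinder:
  assumes F: "is_end G Bo F"
  shows "openin (ends_topology G Bo) {F' \<in> Ends G Bo. \<forall>m\<le>n. end_component F' m = end_component F m}"
proof -
  have "end_component F' m = end_component F m \<longleftrightarrow> F' \<in> end_nbhd G Bo (end_component F m)"
    if F': "F' \<in> Ends G Bo" for F' m
  proof
    assume "end_component F' m = end_component F m"
    then show "F' \<in> end_nbhd G Bo (end_component F m)"
      using F' end_component(2)[of F' m] by (auto simp: end_nbhd_def Ends_def)
  next
    assume "F' \<in> end_nbhd G Bo (end_component F m)"
    then show "end_component F' m = end_component F m"
      using end_component_eqI[of F' "end_component F m" m] end_component(1)[OF F]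
      by (auto simp: end_nbhd_def Ends_def)
  qed
  then have "{F' \<in> Ends G Bo. \<forall>m\<le>n. end_component F' m = end_component F m} =
      (\<Inter>m\<in>{..n}. end_nbhd G Bo (end_component F m)) \<inter> topspace (ends_topology G Bo)"
    by (auto simp: topspace_ends_topology)
  moreover have "openin (ends_topology G Bo) (end_nbhd G Bo (end_component F m))" for m
    using openin_end_nbhd level_component_coarsely_clopen end_component(1)[OF F] by blast
  ultimately show ?thesis by auto
qed

lemma end_cylinder_subset_mball:
  assumes "F \<in> Ends G Bo"
  shows "{F' \<in> Ends G Bo. \<forall>m\<le>n. end_component F' m = end_component F m} \<subseteq> ends.mball F (inverse (real (Suc n)))"
  using assms ends_dist_less_inverse_iff[of F _ n] by auto

lemma mball_subset_end_nbhd: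
  assumes U: "coarsely_clopen G Bo U" and F: "F \<in> end_nbhd G Bo U"
  shows "\<exists>r>0. ends.mball F r \<subseteq> end_nbhd G Bo U"
proof -
  obtain n where n: "level_saturated n U" using coarsely_clopen_level_saturated[OF U] by blast
  have "ends.mball F (inverse (real (Suc n))) \<subseteq> end_nbhd G Bo U"
  proof
    fix F' assume "F' \<in> ends.mball F (inverse (real (Suc n)))"
    then have F': "F \<in> Ends G Bo" "F' \<in> Ends G Bo" "end_component F' n = end_component F n"
      using ends_dist_less_inverse_iff[of F F' n] by auto
    then have "U \<in> F'"
      using F end_mem_iff_end_component_subset[OF _ U n] by (auto simp: end_nbhd_def Ends_def)
    with F'(2) show "F' \<in> end_nbhd G Bo U" by (simp add: end_nbhd_def)
  qed
  then show ?thesis by (intro exI[of _ "inverse (real (Suc n))"]) auto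
qed

lemma ends_topology_eq_mtopology: "ends_topology G Bo = ends.mtopology"
proof -
  have "openin ends.mtopology W" if W: "openin (ends_topology G Bo) W" for W
    unfolding ends.openin_mtopology
  proof (intro conjI allI impI)
    show "W \<subseteq> Ends G Bo" using openin_subset[OF W] by (simp add: topspace_ends_topology)
    fix F assume "F \<in> W"
    then obtain U where "coarsely_clopen G Bo U" "F \<in> end_nbhd G Bo U" "end_nbhd G Bo U \<subseteq> W"
      using openin_ends_topology_imp_basic[OF W] by blast
    then show "\<exists>r>0. ends.mball F r \<subseteq> W" using mball_subset_end_nbhd by blast
  qed
  moreover have "openin (ends_topology G Bo) W" if W: "openin ends.mtopology W" for W
    unfolding openin_subopen[of _ W]
  proof
    fix F assume "F \<in> W"
    then obtain r where r: "r > 0" "ends.mball F r \<subseteq> W" and F: "F \<in> Ends G Bo"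
      using W ends.openin_mtopology by blast
    obtain n where "inverse (real (Suc n)) < r" using reals_Archimedean[OF r(1)] by blast
    then have "{F' \<in> Ends G Bo. \<forall>m\<le>n. end_component F' m = end_component F m} \<subseteq> W"
      using end_cylinder_subset_mball[OF F, of n] ends.mball_subset_concentric[of _ r F] r(2) by force
    then show "\<exists>T. openin (ends_topology G Bo) T \<and> F \<in> T \<and> T \<subseteq> W"
      using openin_end_cylinder F by (auto simp: Ends_def)
  qed
  ultimately show ?thesis unfolding topology_eq by blast
qed

lemma metrizable_ends: "metrizable_space (ends_topology G Bo)"
  by (simp add: ends_topology_eq_mtopology ends.metrizable_space_mtopology)

end

lemma (in cayley_graph) metrizable_ends_if_components_tame:
  assumes "\<forall>B\<in>Bo. \<Union>{C \<in> one_components d (carrier G - B). C \<in> Bo} \<in> Bo"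
    and "\<forall>B\<in>Bo. finite {C \<in> one_components d (carrier G - B). C \<notin> Bo}"
  shows "metrizable_space (ends_topology G Bo)"
proof (cases "carrier G \<in> Bo")
  case False
  with assms have "tame_complements G E d"
    by (simp add: tame_complements_def tame_complements_axioms_def cayley_graph_axioms)
  then show ?thesis by (rule tame_complements.metrizable_ends)
qed (rule metrizable_ends_if_bounded)

theorem corollary7p10:
  fixes G :: "('a, 'b) monoid_scheme" and d :: "'a \<Rightarrow> 'a \<Rightarrow> nat" and Bo :: "'a set set"
  assumes "group G"
    and "cayley_graph_metric G d"
    and "Bo = metric_bornology G d"
  shows "\<not> metrizable_space (ends_topology G Bo) \<longleftrightarrow>
    ((\<exists>B\<in>Bo. \<Union>{C \<in> one_components d (carrier G - B). C \<in> Bo} \<notin> Bo) \<or>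
     (\<exists>B\<in>Bo. infinite {C \<in> one_components d (carrier G - B). C \<notin> Bo}))"
proof -
  obtain E where E: "E \<subseteq> carrier G \<times> carrier G" "sym E" "\<forall>x\<in>carrier G. \<forall>y\<in>carrier G. (x, y) \<in> E\<^sup>*"
      "\<forall>x\<in>carrier G. \<forall>y\<in>carrier G. d x y = graph_dist E x y"
    and invariant: "\<forall>g\<in>carrier G. \<forall>x\<in>carrier G. \<forall>y\<in>carrier G. d (g \<otimes>\<^bsub>G\<^esub> x) (g \<otimes>\<^bsub>G\<^esub> y) = d x y"
    using assms(2) unfolding cayley_graph_metric_def by blast
  have "cayley_graph G E d"
    by (intro cayley_graph.intro connected_graph_metric.intro cayley_graph_axioms.intro assms(1))
      (use E invariant in auto)
  then interpret cayley_graph G E d .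
  show ?thesis
    unfolding assms(3)
    using metrizable_ends_if_components_tame
      not_metrizable_ends_if_unbounded_Union_bounded_components
      not_metrizable_ends_if_infinitely_many_unbounded_components
    by blast
qed

end
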